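(* Let $\mathbf{A}\in\{0,1\}^{m\times n}$ be the bi-adjacency matrix of a $(2,d,\epsilon)$-expander with $\epsilon\le 1/4$. Let $\mathbf{x},\mathbf{x}'\in\mathbb{R}^n$ satisfy $\mathbf{A}\mathbf{x}=\mathbf{A}\mathbf{x}'$ and $\|\mathbf{x}'\|_1\le\|\mathbf{x}\|_1$. Let $S=\{s\}$ where $s$ is an index of a largest-in-magnitude entry of $\mathbf{x}$. Then $$\|\mathbf{x}'-\mathbf{x}\|_1\le f(\epsilon)\,\|\mathbf{x}_{S^c}\|_1,\qquad f(\epsilon)=\frac{2(1+2\epsilon)}{1-2\epsilon}.$$
   Context: A bipartite graph $G(X,Y,H)$ has vertex classes $X$ (left) and $Y$ (right) and edge set $H\subset X\times Y$. Its bi-adjacency matrix is the $|Y|\times|X|$ $0/1$ matrix whose column $j$ corresponds to left vertex $j$, row $i$ to right vertex $i$, with entry $1$ iff adjacent. A left $d$-regular bipartite graph (every left vertex has degree $d$) is a $(\phi,d,\epsilon)$-expander if every $\Phi\subset X$ with $|\Phi|\le\phi$ satisfies $|N(\Phi)|\ge(1-\epsilon)d|\Phi|$, where $N(\Phi)$ is the set of neighbours of $\Phi$. For $S\subset\{1,\dots,n\}$, $\mathbf{x}_S\in\mathbb{R}^n$ agrees with $\mathbf{x}$ on $S$ and is $0$ elsewhere; $S^c$ is the complement. *)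

theory Defs
  imports Complex_Main
begin

text \<open>Matrices are m x n real matrices given as functions A i j with row index
  i < m (right vertices Y = {0..<m}) and column index j < n (left vertices
  X = {0..<n}); vectors in R^n are functions on {0..<n}.\<close>

definition zero_one_matrix :: "nat \<Rightarrow> nat \<Rightarrow> (nat \<Rightarrow> nat \<Rightarrow> real) \<Rightarrow> bool" where
  "zero_one_matrix m n A \<longleftrightarrow> (\<forall>i<m. \<forall>j<n. A i j = 0 \<or> A i j = 1)"

definition nbhd :: "nat \<Rightarrow> (nat \<Rightarrow> nat \<Rightarrow> real) \<Rightarrow> nat set \<Rightarrow> nat set" where
  "nbhd m A \<Phi> = {i. i < m \<and> (\<exists>j\<in>\<Phi>. A i j = 1)}"

definition left_regular :: "nat \<Rightarrow> nat \<Rightarrow> (nat \<Rightarrow> nat \<Rightarrow> real) \<Rightarrow> nat \<Rightarrow> bool" where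
  "left_regular m n A d \<longleftrightarrow> (\<forall>j<n. card (nbhd m A {j}) = d)"

definition expander :: "nat \<Rightarrow> nat \<Rightarrow> (nat \<Rightarrow> nat \<Rightarrow> real) \<Rightarrow> nat \<Rightarrow> nat \<Rightarrow> real \<Rightarrow> bool" where
  "expander m n A \<phi> d \<epsilon> \<longleftrightarrow> zero_one_matrix m n A \<and> left_regular m n A d \<and>
     (\<forall>\<Phi>. \<Phi> \<subseteq> {0..<n} \<and> card \<Phi> \<le> \<phi> \<longrightarrow>
        real (card (nbhd m A \<Phi>)) \<ge> (1 - \<epsilon>) * real d * real (card \<Phi>))"

definition mat_vec :: "nat \<Rightarrow> (nat \<Rightarrow> nat \<Rightarrow> real) \<Rightarrow> (nat \<Rightarrow> real) \<Rightarrow> nat \<Rightarrow> real" where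
  "mat_vec n A x i = (\<Sum>j<n. A i j * x j)"

definition norm1 :: "nat \<Rightarrow> (nat \<Rightarrow> real) \<Rightarrow> real" where
  "norm1 n x = (\<Sum>j<n. \<bar>x j\<bar>)"

definition restrict_vec :: "(nat \<Rightarrow> real) \<Rightarrow> nat set \<Rightarrow> nat \<Rightarrow> real" where
  "restrict_vec x S j = (if j \<in> S then x j else 0)"

end

theory Submission
  imports Defs
begin

text \<open>
  Put \<open>e = x' - x\<close>; by hypothesis \<open>e\<close> lies in the kernel of \<open>A\<close>.
  (1) Every row \<open>i\<close> adjacent to a left vertex \<open>j\<close> gives \<open>e j = - \<Sum>\<^sub>k\<^sub>\<noteq>\<^sub>j A i k * e k\<close>;
      summing over the \<open>d\<close> neighbours of \<open>j\<close> yields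
      \<open>d |e j| \<le> \<Sum>\<^sub>k\<^sub>\<noteq>\<^sub>j |N(j) \<inter> N(k)| |e k|\<close>.
  (2) Expansion of two-element sets forces \<open>|N(j) \<inter> N(k)| \<le> 2\<epsilon>d\<close>, hence
      \<open>|e j| \<le> 2\<epsilon> \<Sum>\<^sub>k\<^sub>\<noteq>\<^sub>j |e k|\<close> for every kernel vector and every index \<open>j\<close>.
  (3) The hypothesis \<open>\<parallel>x'\<parallel>\<^sub>1 \<le> \<parallel>x\<parallel>\<^sub>1\<close> and the triangle inequality give
      \<open>\<Sum>\<^sub>k\<^sub>\<noteq>\<^sub>s |e k| \<le> |e s| + 2 \<parallel>x\<^sub>S\<^sub>c\<parallel>\<^sub>1\<close>.
  (4) Elementary algebra combines (2) at \<open>j = s\<close> with (3).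
  The argument works for any index \<open>s\<close>.
\<close>

lemma norm1_split:
  assumes "s < n"
  shows "norm1 n f = \<bar>f s\<bar> + (\<Sum>k\<in>{..<n} - {s}. \<bar>f k\<bar>)"
  using assms by (simp add: norm1_def sum.remove)

lemma norm1_restrict_compl:
  assumes "s < n"
  shows "norm1 n (restrict_vec x (- {s})) = (\<Sum>k\<in>{..<n} - {s}. \<bar>x k\<bar>)"
  using assms by (simp add: norm1_split restrict_vec_def)

lemma kernel_row_bound:
  assumes zo: "zero_one_matrix m n A"
    and ker: "mat_vec n A e i = 0" and i: "i < m" and Aij: "A i j = 1" and j: "j < n"
  shows "\<bar>e j\<bar> \<le> (\<Sum>k\<in>{..<n} - {j}. A i k * \<bar>e k\<bar>)"
proof -
  have "mat_vec n A e i = A i j * e j + (\<Sum>k\<in>{..<n} - {j}. A i k * e k)"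
    using j by (simp add: mat_vec_def sum.remove)
  hence "\<bar>e j\<bar> = \<bar>\<Sum>k\<in>{..<n} - {j}. A i k * e k\<bar>"
    using ker Aij by (simp add: eq_neg_iff_add_eq_0 abs_minus_commute add.commute)
  also have "\<dots> \<le> (\<Sum>k\<in>{..<n} - {j}. \<bar>A i k * e k\<bar>)" by (rule sum_abs)
  also have "\<dots> = (\<Sum>k\<in>{..<n} - {j}. A i k * \<bar>e k\<bar>)"
  proof (rule sum.cong)
    fix k assume "k \<in> {..<n} - {j}"
    hence "A i k = 0 \<or> A i k = 1" using zo i by (auto simp: zero_one_matrix_def)
    thus "\<bar>A i k * e k\<bar> = A i k * \<bar>e k\<bar>" by auto
  qed simp
  finally show ?thesis .
qed

lemma column_sum_over_nbhd:
  assumes zo: "zero_one_matrix m n A" and k: "k < n"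
  shows "(\<Sum>i\<in>nbhd m A {j}. A i k) = real (card (nbhd m A {j} \<inter> nbhd m A {k}))"
proof -
  have "(\<Sum>i\<in>nbhd m A {j}. A i k) = (\<Sum>i\<in>nbhd m A {j}. if i \<in> nbhd m A {k} then 1 else 0)"
  proof (rule sum.cong)
    fix i assume "i \<in> nbhd m A {j}"
    hence "i < m" by (simp add: nbhd_def)
    moreover have "A i k = 0 \<or> A i k = 1" using zo k \<open>i < m\<close> by (auto simp: zero_one_matrix_def)
    ultimately show "A i k = (if i \<in> nbhd m A {k} then 1 else 0)" by (auto simp: nbhd_def)
  qed simp
  also have "\<dots> = real (card (nbhd m A {j} \<inter> nbhd m A {k}))"
    by (simp add: sum.If_cases Int_def nbhd_def conj_ac)
  finally show ?thesis .
qed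

lemma kernel_coordinate_bound:
  assumes zo: "zero_one_matrix m n A" and reg: "left_regular m n A d"
    and ker: "\<forall>i<m. mat_vec n A e i = 0" and j: "j < n"
  shows "real d * \<bar>e j\<bar>
           \<le> (\<Sum>k\<in>{..<n} - {j}. real (card (nbhd m A {j} \<inter> nbhd m A {k})) * \<bar>e k\<bar>)"
proof -
  let ?N = "nbhd m A {j}"
  have "real d * \<bar>e j\<bar> = (\<Sum>i\<in>?N. \<bar>e j\<bar>)"
    using reg j by (simp add: left_regular_def)
  also have "\<dots> \<le> (\<Sum>i\<in>?N. \<Sum>k\<in>{..<n} - {j}. A i k * \<bar>e k\<bar>)"
  proof (rule sum_mono)
    fix i assume "i \<in> ?N"
    hence "i < m" "A i j = 1" by (auto simp: nbhd_def)
    thus "\<bar>e j\<bar> \<le> (\<Sum>k\<in>{..<n} - {j}. A i k * \<bar>e k\<bar>)"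
      using kernel_row_bound[OF zo _ _ _ j] ker by blast
  qed
  also have "\<dots> = (\<Sum>k\<in>{..<n} - {j}. (\<Sum>i\<in>?N. A i k) * \<bar>e k\<bar>)"
    by (simp add: sum.swap[of _ ?N] sum_distrib_right)
  also have "\<dots> = (\<Sum>k\<in>{..<n} - {j}. real (card (?N \<inter> nbhd m A {k})) * \<bar>e k\<bar>)"
    using column_sum_over_nbhd[OF zo] by simp
  finally show ?thesis .
qed

text \<open>Two distinct left vertices of a \<open>(2,d,\<epsilon>)\<close>-expander share at most \<open>2\<epsilon>d\<close>
  neighbours, by inclusion-exclusion on \<open>N({j,k})\<close>.\<close>
lemma expander_overlap_bound:
  assumes ex: "expander m n A 2 d \<epsilon>" and j: "j < n" and k: "k < n" and jk: "j \<noteq> k"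
  shows "real (card (nbhd m A {j} \<inter> nbhd m A {k})) \<le> 2 * \<epsilon> * real d"
proof -
  have "card (nbhd m A {j}) = d" "card (nbhd m A {k}) = d"
    using ex j k by (auto simp: expander_def left_regular_def)
  moreover have "nbhd m A {j,k} = nbhd m A {j} \<union> nbhd m A {k}"
    by (auto simp: nbhd_def)
  ultimately have incl_excl:
    "card (nbhd m A {j,k}) + card (nbhd m A {j} \<inter> nbhd m A {k}) = 2 * d"
    using card_Un_Int[of "nbhd m A {j}" "nbhd m A {k}"] by (simp add: nbhd_def)
  have pair: "{j,k} \<subseteq> {0..<n}" "card {j,k} = 2" using j k jk by auto
  hence "real (card (nbhd m A {j,k})) \<ge> (1 - \<epsilon>) * real d * real (card {j,k})"
    using ex unfolding expander_def by (metis order_refl)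
  hence "real (card (nbhd m A {j,k})) \<ge> (1 - \<epsilon>) * real d * 2"
    using pair by simp
  with incl_excl show ?thesis
    by (simp add: algebra_simps flip: of_nat_add)
qed

lemma expander_kernel_coordinate:
  assumes ex: "expander m n A 2 d \<epsilon>" and d: "d \<ge> 1"
    and ker: "\<forall>i<m. mat_vec n A e i = 0" and j: "j < n"
  shows "\<bar>e j\<bar> \<le> 2 * \<epsilon> * (\<Sum>k\<in>{..<n} - {j}. \<bar>e k\<bar>)"
proof -
  have zo: "zero_one_matrix m n A" and reg: "left_regular m n A d"
    using ex by (auto simp: expander_def)
  have "real d * \<bar>e j\<bar>
          \<le> (\<Sum>k\<in>{..<n} - {j}. real (card (nbhd m A {j} \<inter> nbhd m A {k})) * \<bar>e k\<bar>)"
    by (rule kernel_coordinate_bound[OF zo reg ker j])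
  also have "\<dots> \<le> (\<Sum>k\<in>{..<n} - {j}. 2 * \<epsilon> * real d * \<bar>e k\<bar>)"
    using expander_overlap_bound[OF ex j] by (intro sum_mono mult_right_mono) auto
  also have "\<dots> = real d * (2 * \<epsilon> * (\<Sum>k\<in>{..<n} - {j}. \<bar>e k\<bar>))"
    by (simp add: sum_distrib_left mult_ac)
  finally show ?thesis using d by simp
qed

text \<open>An expander on at least two left vertices has \<open>\<epsilon> \<ge> 0\<close>, since two vertices
  have at most \<open>2d\<close> neighbours.\<close>
lemma expander_eps_nonneg:
  assumes ex: "expander m n A 2 d \<epsilon>" and d: "d \<ge> 1" and n: "2 \<le> n"
  shows "0 \<le> \<epsilon>"
proof -
  have "0 \<le> real (card (nbhd m A {0} \<inter> nbhd m A {1}))" by simp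
  also have "\<dots> \<le> 2 * \<epsilon> * real d" using expander_overlap_bound[OF ex] n by simp
  finally show ?thesis using d by (simp add: zero_le_mult_iff)
qed

lemma norm1_decrease_tail_bound:
  assumes le: "norm1 n x' \<le> norm1 n x" and s: "s < n"
  shows "(\<Sum>k\<in>{..<n} - {s}. \<bar>x' k - x k\<bar>)
           \<le> \<bar>x' s - x s\<bar> + 2 * (\<Sum>k\<in>{..<n} - {s}. \<bar>x k\<bar>)"
proof -
  have "(\<Sum>k\<in>{..<n} - {s}. \<bar>x' k - x k\<bar>) \<le> (\<Sum>k\<in>{..<n} - {s}. \<bar>x' k\<bar> + \<bar>x k\<bar>)"
    by (intro sum_mono) simp
  moreover have "\<bar>x s\<bar> \<le> \<bar>x' s\<bar> + \<bar>x' s - x s\<bar>" by simp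
  ultimately show ?thesis
    using le unfolding norm1_split[OF s] by (simp add: sum.distrib)
qed

lemma combine_estimates:
  fixes a T \<sigma> c :: real
  assumes peak: "a \<le> c * T" and tail: "T \<le> a + 2 * \<sigma>" and c: "0 \<le> c" "c < 1"
  shows "a + T \<le> 2 * (1 + c) / (1 - c) * \<sigma>"
proof -
  have "(1 - c) * (a + T) \<le> (1 + c) * (T - a)" using peak by (simp add: algebra_simps)
  also have "\<dots> \<le> (1 + c) * (2 * \<sigma>)" using tail c by (intro mult_left_mono) auto
  finally show ?thesis using c by (simp add: pos_le_divide_eq mult_ac)
qed

theorem theorem2:
  fixes m n d :: nat and \<epsilon> :: real and A :: "nat \<Rightarrow> nat \<Rightarrow> real"
    and x x' :: "nat \<Rightarrow> real" and s :: nat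
  assumes "expander m n A 2 d \<epsilon>"
    and "d \<ge> 1"
    and "\<epsilon> \<le> 1/4"
    and "\<forall>i<m. mat_vec n A x i = mat_vec n A x' i"
    and "norm1 n x' \<le> norm1 n x"
    and "s < n" and "\<forall>j<n. \<bar>x j\<bar> \<le> \<bar>x s\<bar>"
  shows "norm1 n (\<lambda>j. x' j - x j)
           \<le> (2 * (1 + 2 * \<epsilon>) / (1 - 2 * \<epsilon>)) * norm1 n (restrict_vec x (- {s}))"
proof -
  define e where "e = (\<lambda>j. x' j - x j)"
  define T where "T = (\<Sum>k\<in>{..<n} - {s}. \<bar>e k\<bar>)"
  define \<sigma> where "\<sigma> = (\<Sum>k\<in>{..<n} - {s}. \<bar>x k\<bar>)"
  have ker: "\<forall>i<m. mat_vec n A e i = 0"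
    using assms(4) by (simp add: mat_vec_def e_def right_diff_distrib sum_subtractf)
  have peak: "\<bar>e s\<bar> \<le> 2 * \<epsilon> * T"
    unfolding T_def by (rule expander_kernel_coordinate[OF assms(1,2) ker assms(6)])
  have tail: "T \<le> \<bar>e s\<bar> + 2 * \<sigma>"
    unfolding T_def \<sigma>_def e_def by (rule norm1_decrease_tail_bound[OF assms(5,6)])
  have "\<bar>e s\<bar> + T \<le> 2 * (1 + 2 * \<epsilon>) / (1 - 2 * \<epsilon>) * \<sigma>"
  proof (cases "2 \<le> n")
    case True
    thus ?thesis using combine_estimates[OF peak tail] expander_eps_nonneg[OF assms(1,2)] assms(3)
      by simp
  next
    case False
    with assms(6) have no_tail: "{..<n} - {s} = {}" by auto
    have "T = 0" "\<sigma> = 0" unfolding T_def \<sigma>_def no_tail by simp_all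
    thus ?thesis using peak by simp
  qed
  thus ?thesis
    using norm1_split[OF assms(6)] norm1_restrict_compl[OF assms(6)]
    by (simp add: e_def T_def \<sigma>_def)
qed

end
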